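(* If $G$ is a $3$-edge-connected cubic graph admitting a hamiltonian cycle, then $fn(G)=2$.
   Context: An orientation is strong if for every ordered pair of distinct vertices $u,v$ there is a directed $uv$-path. An edge $e$ is deletable in an orientation $(G,o)$ if the restriction of $o$ to $E(G)\setminus\{e\}$ is a strong orientation of $G-e$. For a $3$-edge-connected graph $G$, the Frank number $fn(G)$ is the minimum number $k$ such that $G$ admits $k$ orientations with the property that every edge of $G$ is deletable in at least one of them. *)

theory Defs
  imports Main
begin

definition simple_graph :: "'a set \<Rightarrow> 'a set set \<Rightarrow> bool" where
  "simple_graph V E \<longleftrightarrow> finite V \<and>
     (\<forall>e\<in>E. \<exists>u v. e = {u, v} \<and> u \<noteq> v \<and> u \<in> V \<and> v \<in> V)"

definition adj_rel :: "'a set set \<Rightarrow> ('a \<times> 'a) set" where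
  "adj_rel E = {(u, v). {u, v} \<in> E}"

definition connected_graph :: "'a set \<Rightarrow> 'a set set \<Rightarrow> bool" where
  "connected_graph V E \<longleftrightarrow> (\<forall>u\<in>V. \<forall>v\<in>V. (u, v) \<in> (adj_rel E)\<^sup>*)"

definition k_edge_connected :: "nat \<Rightarrow> 'a set \<Rightarrow> 'a set set \<Rightarrow> bool" where
  "k_edge_connected k V E \<longleftrightarrow>
     (\<forall>F. F \<subseteq> E \<and> card F < k \<longrightarrow> connected_graph V (E - F))"

definition cubic :: "'a set \<Rightarrow> 'a set set \<Rightarrow> bool" where
  "cubic V E \<longleftrightarrow> (\<forall>v\<in>V. card {e\<in>E. v \<in> e} = 3)"

definition hamiltonian_cycle :: "'a set \<Rightarrow> 'a set set \<Rightarrow> 'a list \<Rightarrow> bool" where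
  "hamiltonian_cycle V E vs \<longleftrightarrow> distinct vs \<and> set vs = V \<and> length vs \<ge> 3 \<and>
     (\<forall>i < length vs. {vs ! i, vs ! ((i + 1) mod length vs)} \<in> E)"

definition is_orientation :: "'a set set \<Rightarrow> ('a set \<Rightarrow> 'a \<times> 'a) \<Rightarrow> bool" where
  "is_orientation E ori \<longleftrightarrow> (\<forall>e\<in>E. e = {fst (ori e), snd (ori e)})"

definition arcs :: "('a set \<Rightarrow> 'a \<times> 'a) \<Rightarrow> 'a set set \<Rightarrow> ('a \<times> 'a) set" where
  "arcs ori F = ori ` F"

definition strong_orientation :: "'a set \<Rightarrow> 'a set set \<Rightarrow> ('a set \<Rightarrow> 'a \<times> 'a) \<Rightarrow> bool" where
  "strong_orientation V E ori \<longleftrightarrow> is_orientation E ori \<and>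
     (\<forall>u\<in>V. \<forall>v\<in>V. u \<noteq> v \<longrightarrow> (u, v) \<in> (arcs ori E)\<^sup>+)"

definition deletable :: "'a set \<Rightarrow> 'a set set \<Rightarrow> ('a set \<Rightarrow> 'a \<times> 'a) \<Rightarrow> 'a set \<Rightarrow> bool" where
  "deletable V E ori e \<longleftrightarrow> strong_orientation V (E - {e}) ori"

definition frank_number :: "'a set \<Rightarrow> 'a set set \<Rightarrow> nat" where
  "frank_number V E = (LEAST k. \<exists>os. length os = k \<and>
      (\<forall>ori\<in>set os. is_orientation E ori) \<and>
      (\<forall>e\<in>E. \<exists>ori\<in>set os. deletable V E ori e))"

end

theory Submission
  imports Defs
begin

text \<open>Number the vertices \<open>0, \<dots>, n - 1\<close> along the hamiltonian cycle. The edges off the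
cycle (chords) form a perfect matching, so \<open>n\<close> is even, and the chords and the cycle edges
\<open>{2k, 2k + 1}\<close> are two perfect matchings. Their union is a disjoint union of even cycles, so some
2-colouring of the vertices is proper for both. From it one builds two orientations carrying
positive integer circulations such that every edge has weight 1 in at least one of them. In a
3-edge-connected graph an edge of weight 1 in a positive circulation is deletable: every cut has at
least three edges, so at least weight 2 leaves every proper vertex set. A single orientation never
suffices: two of the three edges at a vertex point the same way, and deleting the third edge makes
that vertex a source or a sink.\<close>

lemma simple_graph_edge_subset: "simple_graph V E \<Longrightarrow> e \<in> E \<Longrightarrow> e \<subseteq> V"
  unfolding simple_graph_def by auto

lemma simple_graph_finite_edges: "simple_graph V E \<Longrightarrow> finite E"
  using simple_graph_edge_subset by (metis Pow_iff finite_Pow_iff finite_subset simple_graph_def subsetI)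

lemma simple_graph_no_loop: "simple_graph V E \<Longrightarrow> {x} \<notin> E"
  unfolding simple_graph_def by force

lemma is_orientationD: "is_orientation E ori \<Longrightarrow> e \<in> E \<Longrightarrow> e = {fst (ori e), snd (ori e)}"
  by (simp add: is_orientation_def)

lemma is_orientation_ends:
  assumes "is_orientation E ori"
  shows "\<forall>e\<in>E. (snd \<circ> ori) e \<in> e" "\<forall>e\<in>E. (fst \<circ> ori) e \<in> e"
  using is_orientationD[OF assms] by (metis comp_apply insertI1 insertI2)+

section \<open>Cuts and circulations\<close>

lemma k_edge_connected_cut_card:
  assumes k: "k_edge_connected k V E" and S: "S \<subseteq> V" "u \<in> S" and v: "v \<in> V" "v \<notin> S"
  shows "k \<le> card {e\<in>E. e \<inter> S \<noteq> {} \<and> \<not> e \<subseteq> S}"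
proof (rule ccontr)
  let ?F = "{e\<in>E. e \<inter> S \<noteq> {} \<and> \<not> e \<subseteq> S}"
  assume "\<not> k \<le> card ?F"
  hence "connected_graph V (E - ?F)" using k unfolding k_edge_connected_def by auto
  hence "(u, v) \<in> (adj_rel (E - ?F))\<^sup>*" using S v unfolding connected_graph_def by blast
  moreover have "(u, x) \<in> (adj_rel (E - ?F))\<^sup>* \<Longrightarrow> x \<in> S" for x
  proof (induction rule: rtrancl_induct)
    case (step y z)
    then have "{y, z} \<in> E - ?F" unfolding adj_rel_def by auto
    then show ?case using step.IH by auto
  qed (use S in simp)
  ultimately show False using v by blast
qed

definition circulation :: "'a set \<Rightarrow> 'a set set \<Rightarrow> ('a set \<Rightarrow> 'a \<times> 'a) \<Rightarrow> ('a set \<Rightarrow> nat) \<Rightarrow> bool" where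
  "circulation V E ori w \<longleftrightarrow>
     (\<forall>v\<in>V. (\<Sum>e\<in>{e\<in>E. snd (ori e) = v}. w e) = (\<Sum>e\<in>{e\<in>E. fst (ori e) = v}. w e))"

lemma sum_group_by_value:
  fixes w :: "'e \<Rightarrow> 'c::comm_monoid_add"
  assumes "finite E" "finite S"
  shows "(\<Sum>e\<in>{e\<in>E. g e \<in> S}. w e) = (\<Sum>v\<in>S. \<Sum>e\<in>{e\<in>E. g e = v}. w e)"
proof -
  have "(\<Sum>e\<in>{e\<in>E. g e \<in> S}. w e) = (\<Sum>v\<in>S. \<Sum>e\<in>{e\<in>{e\<in>E. g e \<in> S}. g e = v}. w e)"
    using assms by (intro sum.group[symmetric]) auto
  also have "\<dots> = (\<Sum>v\<in>S. \<Sum>e\<in>{e\<in>E. g e = v}. w e)"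
    by (intro sum.cong refl arg_cong2[where f=sum]) auto
  finally show ?thesis .
qed

lemma circulation_cut_balance:
  assumes circ: "circulation V E ori w" and "finite E" "finite S" "S \<subseteq> V"
  shows "(\<Sum>e\<in>{e\<in>E. snd (ori e) \<in> S \<and> fst (ori e) \<notin> S}. w e) =
         (\<Sum>e\<in>{e\<in>E. fst (ori e) \<in> S \<and> snd (ori e) \<notin> S}. w e)"
proof -
  let ?In = "{e\<in>E. snd (ori e) \<in> S \<and> fst (ori e) \<notin> S}"
  let ?Out = "{e\<in>E. fst (ori e) \<in> S \<and> snd (ori e) \<notin> S}"
  let ?Inner = "{e\<in>E. fst (ori e) \<in> S \<and> snd (ori e) \<in> S}"
  have "sum w ?In + sum w ?Inner = (\<Sum>e\<in>{e\<in>E. snd (ori e) \<in> S}. w e)"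
    using \<open>finite E\<close> by (subst sum.union_disjoint[symmetric]) (auto intro: sum.cong)
  also have "\<dots> = (\<Sum>v\<in>S. \<Sum>e\<in>{e\<in>E. snd (ori e) = v}. w e)"
    using assms by (simp add: sum_group_by_value)
  also have "\<dots> = (\<Sum>v\<in>S. \<Sum>e\<in>{e\<in>E. fst (ori e) = v}. w e)"
    using circ \<open>S \<subseteq> V\<close> unfolding circulation_def by (intro sum.cong[OF refl]) blast
  also have "\<dots> = (\<Sum>e\<in>{e\<in>E. fst (ori e) \<in> S}. w e)"
    using assms by (simp add: sum_group_by_value)
  also have "\<dots> = sum w ?Out + sum w ?Inner"
    using \<open>finite E\<close> by (subst sum.union_disjoint[symmetric]) (auto intro: sum.cong)
  finally show ?thesis by simp
qed

lemma circulation_cut_weight: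
  assumes sg: "simple_graph V E" and k: "k_edge_connected k V E" and ori: "is_orientation E ori"
    and circ: "circulation V E ori w" and pos: "\<forall>e\<in>E. 1 \<le> w e"
    and S: "S \<subseteq> V" "u \<in> S" and v: "v \<in> V" "v \<notin> S"
  shows "k \<le> 2 * (\<Sum>e\<in>{e\<in>E. fst (ori e) \<in> S \<and> snd (ori e) \<notin> S}. w e)"
proof -
  let ?In = "{e\<in>E. snd (ori e) \<in> S \<and> fst (ori e) \<notin> S}"
  let ?Out = "{e\<in>E. fst (ori e) \<in> S \<and> snd (ori e) \<notin> S}"
  let ?Cut = "{e\<in>E. e \<inter> S \<noteq> {} \<and> \<not> e \<subseteq> S}"
  have fin: "finite E" "finite S"
    using sg S by (auto simp: simple_graph_finite_edges simple_graph_def finite_subset)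
  have "?Cut \<subseteq> ?In \<union> ?Out"
  proof
    fix e assume e: "e \<in> ?Cut"
    obtain a b where ab: "ori e = (a, b)" by fastforce
    then have "e = {a, b}" using is_orientationD[OF ori] e by fastforce
    then show "e \<in> ?In \<union> ?Out" using e ab by auto
  qed
  then have "card ?Cut \<le> card (?In \<union> ?Out)"
    using fin by (intro card_mono) auto
  then have "k \<le> card (?In \<union> ?Out)"
    using k_edge_connected_cut_card[OF k S v] by linarith
  also have "\<dots> = (\<Sum>e\<in>?In \<union> ?Out. 1)"
    by simp
  also have "\<dots> \<le> sum w (?In \<union> ?Out)"
    using pos by (intro sum_mono) auto
  also have "\<dots> = sum w ?In + sum w ?Out"
    using fin by (intro sum.union_disjoint) auto
  also have "\<dots> = 2 * sum w ?Out"
    using circulation_cut_balance[OF circ fin S(1)] by simp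
  finally show ?thesis .
qed

lemma circulation_deletable:
  assumes sg: "simple_graph V E" and k: "k_edge_connected 3 V E" and ori: "is_orientation E ori"
    and circ: "circulation V E ori w" and pos: "\<forall>e\<in>E. 1 \<le> w e"
    and e0: "w e0 = 1"
  shows "deletable V E ori e0"
  unfolding deletable_def strong_orientation_def
proof (intro conjI ballI impI)
  show "is_orientation (E - {e0}) ori" using ori unfolding is_orientation_def by blast
next
  fix u v assume u: "u \<in> V" and v: "v \<in> V" and "u \<noteq> v"
  let ?A = "arcs ori (E - {e0})"
  show "(u, v) \<in> ?A\<^sup>+"
  proof (rule ccontr)
    assume "(u, v) \<notin> ?A\<^sup>+"
    define S where "S = {x\<in>V. (u, x) \<in> ?A\<^sup>*}"
    have S: "S \<subseteq> V" "u \<in> S" "v \<notin> S"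
      unfolding S_def using u \<open>u \<noteq> v\<close> \<open>(u, v) \<notin> ?A\<^sup>+\<close> by (auto simp: rtrancl_eq_or_trancl)
    let ?Out = "{e\<in>E. fst (ori e) \<in> S \<and> snd (ori e) \<notin> S}"
    have "?Out \<subseteq> {e0}"
    proof
      fix e assume e: "e \<in> ?Out"
      have "snd (ori e) \<in> V"
        using e is_orientationD[OF ori] simple_graph_edge_subset[OF sg] by (metis (no_types, lifting) insert_subset mem_Collect_eq)
      moreover have "(u, snd (ori e)) \<in> ?A\<^sup>*" if "e \<noteq> e0"
      proof -
        have "(fst (ori e), snd (ori e)) \<in> ?A" using e that unfolding arcs_def by force
        then show ?thesis using e unfolding S_def by (auto intro: rtrancl_into_rtrancl)
      qed
      ultimately show "e \<in> {e0}" using e unfolding S_def by blast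
    qed
    then have "(\<Sum>e\<in>?Out. w e) \<le> w e0"
      using sum_mono2[of "{e0}" ?Out w] by simp
    moreover have "3 \<le> 2 * (\<Sum>e\<in>?Out. w e)"
      using circulation_cut_weight[OF sg k ori circ pos S(1,2) v S(3)] .
    ultimately show False using e0 by linarith
  qed
qed

section \<open>Orientations and the Frank number\<close>

lemma strong_orientation_in_out_arcs:
  assumes "strong_orientation V E ori" "x \<in> V" "y \<in> V" "x \<noteq> y"
  shows "\<exists>f\<in>E. snd (ori f) = x" "\<exists>f\<in>E. fst (ori f) = x"
proof -
  have "(y, x) \<in> (arcs ori E)\<^sup>+" "(x, y) \<in> (arcs ori E)\<^sup>+"
    using assms unfolding strong_orientation_def by auto
  then obtain z z' where "(z, x) \<in> arcs ori E" "(x, z') \<in> arcs ori E"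
    by (blast elim: tranclE converse_tranclE)
  then show "\<exists>f\<in>E. snd (ori f) = x" "\<exists>f\<in>E. fst (ori f) = x"
    unfolding arcs_def by (metis fst_conv image_iff snd_conv)+
qed

lemma degree_three_not_all_deletable:
  assumes sg: "simple_graph V E" and ori: "is_orientation E ori"
    and x: "x \<in> V" "y \<in> V" "x \<noteq> y" and deg: "card {e\<in>E. x \<in> e} = 3"
  shows "\<exists>e\<in>E. \<not> deletable V E ori e"
proof (rule ccontr)
  assume "\<not> ?thesis"
  then have del: "strong_orientation V (E - {e}) ori" if "e \<in> E" for e
    using that unfolding deletable_def by blast
  obtain a b c where abc: "{e\<in>E. x \<in> e} = {a, b, c}" "a \<noteq> b" "b \<noteq> c" "a \<noteq> c"
    using deg by (auto simp: card_3_iff)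
  define into_x where "into_x f \<longleftrightarrow> snd (ori f) = x" for f
  have ends: "f \<in> E \<Longrightarrow> f = {fst (ori f), snd (ori f)}" for f
    using is_orientationD[OF ori] .
  have out_of_x: "fst (ori f) = x \<longleftrightarrow> \<not> into_x f" if "f \<in> E" "x \<in> f" for f
    using ends[OF that(1)] that simple_graph_no_loop[OF sg, of x] unfolding into_x_def
    by (cases "ori f") auto
  have mixed: "(\<exists>f\<in>{a, b, c} - {e}. into_x f) \<and> (\<exists>f\<in>{a, b, c} - {e}. \<not> into_x f)"
    if "e \<in> {a, b, c}" for e
  proof -
    have eE: "e \<in> E" using that abc(1) by blast
    obtain f g where f: "f \<in> E - {e}" "snd (ori f) = x" and g: "g \<in> E - {e}" "fst (ori g) = x"
      using strong_orientation_in_out_arcs[OF del[OF eE] x] by blast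
    have "x \<in> f" "x \<in> g" using ends[of f] ends[of g] f g by auto
    then have "f \<in> {a, b, c} - {e}" "g \<in> {a, b, c} - {e}" using f g abc(1) by blast+
    moreover have "into_x f" "\<not> into_x g"
      using f g out_of_x[of g] \<open>x \<in> g\<close> unfolding into_x_def by auto
    ultimately show ?thesis by blast
  qed
  show False
    using mixed[of a] mixed[of b] mixed[of c] abc(2-4)
    by (cases "into_x a"; cases "into_x b"; cases "into_x c") auto
qed

lemma frank_number_eq_2I:
  assumes "is_orientation E o1" "is_orientation E o2"
    and "\<forall>e\<in>E. deletable V E o1 e \<or> deletable V E o2 e"
    and "E \<noteq> {}"
    and no_single: "\<And>ori. is_orientation E ori \<Longrightarrow> \<exists>e\<in>E. \<not> deletable V E ori e"
  shows "frank_number V E = 2"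
  unfolding frank_number_def
proof (rule Least_equality)
  show "\<exists>os. length os = 2 \<and> (\<forall>ori\<in>set os. is_orientation E ori) \<and>
      (\<forall>e\<in>E. \<exists>ori\<in>set os. deletable V E ori e)"
    using assms(1-3) by (intro exI[of _ "[o1, o2]"]) auto
next
  fix k assume "\<exists>os. length os = k \<and> (\<forall>ori\<in>set os. is_orientation E ori) \<and>
      (\<forall>e\<in>E. \<exists>ori\<in>set os. deletable V E ori e)"
  then obtain os where os: "length os = k" "\<forall>ori\<in>set os. is_orientation E ori"
    "\<forall>e\<in>E. \<exists>ori\<in>set os. deletable V E ori e" by blast
  show "2 \<le> k"
  proof (rule ccontr)
    assume "\<not> 2 \<le> k"
    then consider "os = []" | ori where "os = [ori]"
      using os(1) by (metis One_nat_def length_0_conv length_Suc_conv less_2_cases not_le)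
    then show False
      by cases (use \<open>E \<noteq> {}\<close> os(2,3) no_single in fastforce)+
  qed
qed

section \<open>Fixed-point-free involutions\<close>

lemma involution_Diff_pair:
  assumes p: "\<And>a. a \<in> A \<Longrightarrow> p a \<in> A \<and> p a \<noteq> a \<and> p (p a) = a"
    and x: "x \<in> A" and a: "a \<in> A - {x, p x}"
  shows "p a \<in> A - {x, p x} \<and> p a \<noteq> a \<and> p (p a) = a"
proof -
  have pa: "p (p a) = a" "p a \<in> A" "p a \<noteq> a" and "a \<noteq> x" "a \<noteq> p x"
    using p a by auto
  have "p a \<noteq> x"
  proof
    assume "p a = x"
    then have "p x = a" using pa(1) by simp
    then show False using \<open>a \<noteq> p x\<close> by simp
  qed
  moreover have "p a \<noteq> p x"
  proof
    assume "p a = p x"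
    then have "p (p a) = p (p x)" by simp
    then show False using pa(1) p[OF x] \<open>a \<noteq> x\<close> by simp
  qed
  ultimately show ?thesis using pa by blast
qed

lemma involution_card_even:
  assumes "finite A" and "\<And>a. a \<in> A \<Longrightarrow> p a \<in> A \<and> p a \<noteq> a \<and> p (p a) = a"
  shows "even (card A)"
  using assms
proof (induction "card A" arbitrary: A rule: less_induct)
  case less
  show ?case
  proof (cases "A = {}")
    case False
    then obtain x where x: "x \<in> A" by blast
    let ?A' = "A - {x, p x}"
    have pair: "{x, p x} \<subseteq> A" "card {x, p x} = 2"
      using less.prems(2)[OF x] x by auto
    then have "card A = card ?A' + 2"
      using card_mono[OF less.prems(1) pair(1)] less.prems(1)
      by (simp add: card_Diff_subset finite_subset)
    moreover have "even (card ?A')"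
      using less.prems involution_Diff_pair[OF less.prems(2) x] \<open>card A = card ?A' + 2\<close>
      by (intro less.hyps) auto
    ultimately show ?thesis by simp
  qed simp
qed

text \<open>Removing the pair \<open>{x, y}\<close> from an involution \<open>q\<close>: the \<open>q\<close>-partners of \<open>x\<close> and \<open>y\<close>
become partners of each other.\<close>

definition shortcut :: "('a \<Rightarrow> 'a) \<Rightarrow> 'a \<Rightarrow> 'a \<Rightarrow> 'a \<Rightarrow> 'a" where
  "shortcut q x y a = (if q a = x then q y else if q a = y then q x else q a)"

lemma shortcut_involution:
  assumes q: "\<And>a. a \<in> A \<Longrightarrow> q a \<in> A \<and> q a \<noteq> a \<and> q (q a) = a"
    and xy: "x \<in> A" "y \<in> A" "x \<noteq> y" and a: "a \<in> A - {x, y}"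
  shows "shortcut q x y a \<in> A - {x, y} \<and> shortcut q x y a \<noteq> a \<and>
    shortcut q x y (shortcut q x y a) = a"
proof -
  have aA: "a \<in> A" "a \<noteq> x" "a \<noteq> y" "q a \<in> A" "q a \<noteq> a" "q (q a) = a"
    using a q[of a] by auto
  have qx: "q x \<in> A" "q x \<noteq> x" "q (q x) = x" and qy: "q y \<in> A" "q y \<noteq> y" "q (q y) = y"
    using q xy by auto
  have "q x \<noteq> q y" using qx(3) qy(3) xy(3) by metis
  consider "q a = x" | "q a = y" | "q a \<notin> {x, y}" by blast
  then show ?thesis
  proof cases
    case 1
    then have "a = q x" using aA(6) by simp
    moreover have "q y \<noteq> x" using qy(3) \<open>a = q x\<close> aA(3) by force
    ultimately show ?thesis
      using 1 aA qx qy \<open>q x \<noteq> q y\<close> xy(3) unfolding shortcut_def by auto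
  next
    case 2
    then have "a = q y" using aA(6) by simp
    moreover have "q x \<noteq> y" using qx(3) \<open>a = q y\<close> aA(2) by force
    ultimately show ?thesis
      using 2 aA qx qy \<open>q x \<noteq> q y\<close> xy(3) unfolding shortcut_def by auto
  next
    case 3
    then show ?thesis using aA unfolding shortcut_def by simp
  qed
qed

lemma colouring_lift_shortcut:
  fixes c :: "'a \<Rightarrow> bool"
  assumes p: "\<And>a. a \<in> A \<Longrightarrow> p a \<in> A \<and> p a \<noteq> a \<and> p (p a) = a"
    and q: "\<And>a. a \<in> A \<Longrightarrow> q a \<in> A \<and> q a \<noteq> a \<and> q (q a) = a"
    and x: "x \<in> A"
    and c: "\<forall>a\<in>A - {x, p x}. c (p a) \<noteq> c a \<and> c (shortcut q x (p x) a) \<noteq> c a"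
  defines "c' \<equiv> c(x := \<not> c (q x), p x := c (q x))"
  shows "\<forall>a\<in>A. c' (p a) \<noteq> c' a \<and> c' (q a) \<noteq> c' a"
proof
  fix a assume a: "a \<in> A"
  define y where "y = p x"
  have y: "y \<noteq> x" "p y = x" using p x unfolding y_def by auto
  have qx: "q x \<in> A" "q x \<noteq> x" "q (q x) = x" and qy: "q y \<in> A" "q y \<noteq> y" "q (q y) = y"
    using q x p[OF x] unfolding y_def by auto
  have c': "c' x = (\<not> c (q x))" "c' y = c (q x)" "b \<in> A - {x, y} \<Longrightarrow> c' b = c b" for b
    using y(1) unfolding c'_def y_def by auto
  have c_shortcut: "c (shortcut q x y b) \<noteq> c b" if "b \<in> A - {x, y}" for b
    using c that unfolding y_def by blast
  consider "a = x" | "a = y" | "a \<in> A - {x, y}" using a by blast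
  then show "c' (p a) \<noteq> c' a \<and> c' (q a) \<noteq> c' a"
  proof cases
    case 1
    then show ?thesis using y qx c' unfolding y_def by (cases "q x = p x") auto
  next
    case 2
    have "c' (q y) \<noteq> c' y"
    proof (cases "q y = x")
      case False
      then have "q x \<in> A - {x, y}" "shortcut q x y (q x) = q y"
        using q x qx qy unfolding shortcut_def by auto
      then show ?thesis using False c_shortcut[of "q x"] qy c' by auto
    qed (use c' in auto)
    then show ?thesis using 2 y c' by auto
  next
    case 3
    then have "q a \<in> A" "q (q a) = a" using q by auto
    then have "c' (q a) \<noteq> c' a"
      using 3 c_shortcut[OF 3] c' unfolding shortcut_def by (cases "q a = x"; cases "q a = y") auto
    then show ?thesis
      using 3 involution_Diff_pair[OF p x] c c' unfolding y_def by auto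
  qed
qed

lemma two_involutions_colouring:
  assumes "finite A"
    and p: "\<And>a. a \<in> A \<Longrightarrow> p a \<in> A \<and> p a \<noteq> a \<and> p (p a) = a"
    and q: "\<And>a. a \<in> A \<Longrightarrow> q a \<in> A \<and> q a \<noteq> a \<and> q (q a) = a"
  shows "\<exists>c :: 'a \<Rightarrow> bool. \<forall>a\<in>A. c (p a) \<noteq> c a \<and> c (q a) \<noteq> c a"
  using assms
proof (induction "card A" arbitrary: A q rule: less_induct)
  case less
  show ?case
  proof (cases "A = {}")
    case False
    then obtain x where x: "x \<in> A" by blast
    have "card (A - {x, p x}) < card A"
      using x less.prems(1) by (intro psubset_card_mono) auto
    moreover have "x \<noteq> p x" "p x \<in> A" using less.prems(2)[OF x] by auto
    ultimately have "\<exists>c :: 'a \<Rightarrow> bool. \<forall>a\<in>A - {x, p x}.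
        c (p a) \<noteq> c a \<and> c (shortcut q x (p x) a) \<noteq> c a"
      using less.prems(1) involution_Diff_pair[OF less.prems(2) x]
        shortcut_involution[OF less.prems(3) x]
      by (intro less.hyps) auto
    then obtain c :: "'a \<Rightarrow> bool"
      where "\<forall>a\<in>A - {x, p x}. c (p a) \<noteq> c a \<and> c (shortcut q x (p x) a) \<noteq> c a" ..
    then show ?thesis
      using colouring_lift_shortcut[OF less.prems(2,3) x] by (intro exI)
  qed simp
qed

section \<open>Cubic graphs with a hamiltonian cycle\<close>

locale cubic_hamiltonian =
  fixes V :: "'a set" and E :: "'a set set" and vs :: "'a list"
  assumes simple: "simple_graph V E" and cubic: "cubic V E" and hamiltonian: "hamiltonian_cycle V E vs"
begin

abbreviation n :: nat where "n \<equiv> length vs"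

definition nxt :: "nat \<Rightarrow> nat" where "nxt i = Suc i mod n"
definition prv :: "nat \<Rightarrow> nat" where "prv i = (i + n - 1) mod n"
definition cycle_edge :: "nat \<Rightarrow> 'a set" where "cycle_edge i = {vs ! i, vs ! nxt i}"
definition mate :: "nat \<Rightarrow> nat" where
  "mate i = (SOME j. j < n \<and> {vs ! i, vs ! j} \<in> E \<and> j \<noteq> nxt i \<and> j \<noteq> prv i)"
definition chord :: "nat \<Rightarrow> 'a set" where "chord i = {vs ! i, vs ! mate i}"

lemma n_ge_3: "3 \<le> n" and distinct_vs: "distinct vs" and set_vs: "set vs = V"
  using hamiltonian unfolding hamiltonian_cycle_def by auto

lemma vs_in_V: "i < n \<Longrightarrow> vs ! i \<in> V"
  using set_vs by auto

lemma vs_eq_iff: "i < n \<Longrightarrow> j < n \<Longrightarrow> vs ! i = vs ! j \<longleftrightarrow> i = j"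
  using distinct_vs by (simp add: nth_eq_iff_index_eq)

lemma V_obtain_index: "x \<in> V \<Longrightarrow> \<exists>i<n. vs ! i = x"
  using set_vs by (auto simp: in_set_conv_nth)

lemma nxt_eq: "i < n \<Longrightarrow> nxt i = (if Suc i = n then 0 else Suc i)"
  unfolding nxt_def by auto

lemma prv_eq: "i < n \<Longrightarrow> prv i = (if i = 0 then n - 1 else i - 1)"
proof (cases "i = 0")
  case False
  assume "i < n"
  have "i + n - 1 = (i - 1) + n" using False by simp
  then have "prv i = (i - 1) mod n" unfolding prv_def by simp
  then show ?thesis using False \<open>i < n\<close> by simp
qed (simp add: prv_def)

lemma nxt_less: "i < n \<Longrightarrow> nxt i < n" and prv_less: "i < n \<Longrightarrow> prv i < n"
  using nxt_eq prv_eq n_ge_3 by auto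

lemma nxt_prv: "i < n \<Longrightarrow> nxt (prv i) = i" and prv_nxt: "i < n \<Longrightarrow> prv (nxt i) = i"
  using nxt_eq prv_eq nxt_less prv_less n_ge_3 by auto

lemma nxt_neq: "i < n \<Longrightarrow> nxt i \<noteq> i" and prv_neq: "i < n \<Longrightarrow> prv i \<noteq> i"
  and nxt_neq_prv: "i < n \<Longrightarrow> nxt i \<noteq> prv i"
  using nxt_eq prv_eq n_ge_3 by auto

lemma cycle_edge_in_E: "i < n \<Longrightarrow> cycle_edge i \<in> E"
  using hamiltonian unfolding hamiltonian_cycle_def cycle_edge_def nxt_def by auto

lemma cycle_edge_prv: "i < n \<Longrightarrow> cycle_edge (prv i) = {vs ! prv i, vs ! i}"
  unfolding cycle_edge_def using nxt_prv by simp

lemma cycle_edge_inj: "i < n \<Longrightarrow> j < n \<Longrightarrow> cycle_edge i = cycle_edge j \<Longrightarrow> i = j"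
  unfolding cycle_edge_def using vs_eq_iff nxt_less nxt_neq_prv prv_nxt
  by (metis doubleton_eq_iff)

lemma edges_at_vs_card: "i < n \<Longrightarrow> card {e\<in>E. vs ! i \<in> e} = 3"
  using cubic vs_in_V unfolding cubic_def by blast

lemma third_neighbour: "i < n \<Longrightarrow> \<exists>j<n. {vs ! i, vs ! j} \<in> E \<and> j \<noteq> nxt i \<and> j \<noteq> prv i"
proof -
  assume i: "i < n"
  let ?Ei = "{e\<in>E. vs ! i \<in> e}"
  have "card {cycle_edge i, cycle_edge (prv i)} \<le> 2"
    by (intro card_insert_le_m1) auto
  then have "\<not> ?Ei \<subseteq> {cycle_edge i, cycle_edge (prv i)}"
    using card_mono[of "{cycle_edge i, cycle_edge (prv i)}" ?Ei] edges_at_vs_card[OF i] by auto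
  then obtain f where f: "f \<in> E" "vs ! i \<in> f" "f \<noteq> cycle_edge i" "f \<noteq> cycle_edge (prv i)"
    by blast
  obtain u w where uw: "f = {u, w}" "u \<in> V" "w \<in> V"
    using simple f(1) unfolding simple_graph_def by blast
  define y where "y = (if u = vs ! i then w else u)"
  have fy: "f = {vs ! i, y}" "y \<in> V"
    unfolding y_def using uw f(2) by auto
  then obtain j where j: "j < n" "vs ! j = y" using V_obtain_index by blast
  have "j \<noteq> nxt i" "j \<noteq> prv i"
    using f(3,4) fy j cycle_edge_prv[OF i] unfolding cycle_edge_def by (auto simp: insert_commute)
  then show ?thesis using j f(1) fy by auto
qed

lemma mate_props: "i < n \<Longrightarrow> mate i < n \<and> chord i \<in> E \<and> mate i \<noteq> nxt i \<and> mate i \<noteq> prv i \<and> mate i \<noteq> i"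
proof -
  assume i: "i < n"
  have "mate i < n \<and> chord i \<in> E \<and> mate i \<noteq> nxt i \<and> mate i \<noteq> prv i"
    unfolding mate_def chord_def using someI_ex[OF third_neighbour[OF i]] by blast
  moreover have "mate i \<noteq> i"
  proof
    assume "mate i = i"
    then have "{vs ! i} \<in> E" using calculation unfolding chord_def by simp
    then show False using simple_graph_no_loop[OF simple] by blast
  qed
  ultimately show ?thesis by blast
qed

lemma chord_neq_cycle_edge: "i < n \<Longrightarrow> j < n \<Longrightarrow> chord i \<noteq> cycle_edge j"
proof
  assume i: "i < n" and j: "j < n" and eq: "chord i = cycle_edge j"
  have m: "mate i < n" "mate i \<noteq> nxt i" "mate i \<noteq> prv i" "mate i \<noteq> i" using mate_props[OF i] by auto
  have "vs ! i \<in> cycle_edge j" "vs ! mate i \<in> cycle_edge j"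
    using eq unfolding chord_def by auto
  then have "i = j \<or> i = nxt j" "mate i = j \<or> mate i = nxt j"
    unfolding cycle_edge_def using vs_eq_iff i j m(1) nxt_less[OF j] by auto
  then show False using m prv_nxt[OF j] by auto
qed

lemma edges_at_vs: "i < n \<Longrightarrow> {e\<in>E. vs ! i \<in> e} = {cycle_edge i, cycle_edge (prv i), chord i}"
proof -
  assume i: "i < n"
  have sub: "{cycle_edge i, cycle_edge (prv i), chord i} \<subseteq> {e\<in>E. vs ! i \<in> e}"
    using cycle_edge_in_E[OF i] cycle_edge_in_E[OF prv_less[OF i]] cycle_edge_prv[OF i] mate_props[OF i]
    unfolding cycle_edge_def chord_def by auto
  have "cycle_edge i \<noteq> cycle_edge (prv i)"
    using cycle_edge_inj[OF i prv_less[OF i]] prv_neq[OF i] by metis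
  then have "card {cycle_edge i, cycle_edge (prv i), chord i} = 3"
    using chord_neq_cycle_edge[OF i i] chord_neq_cycle_edge[OF i prv_less[OF i]] by simp
  then show ?thesis
    using card_subset_eq[OF _ sub] simple_graph_finite_edges[OF simple] edges_at_vs_card[OF i] by auto
qed

lemma mate_mate: "i < n \<Longrightarrow> mate (mate i) = i"
proof -
  assume i: "i < n"
  define j where "j = mate i"
  have j: "j < n" "chord i \<in> E"
    using mate_props[OF i] unfolding j_def by auto
  have "chord i \<in> {e\<in>E. vs ! j \<in> e}" using j unfolding chord_def j_def by simp
  moreover have "chord i \<noteq> cycle_edge j" "chord i \<noteq> cycle_edge (prv j)"
    using chord_neq_cycle_edge i j prv_less by auto
  ultimately have "chord i = chord j" using edges_at_vs[OF j(1)] by simp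
  then have "vs ! i \<in> {vs ! j, vs ! mate j}" unfolding chord_def by blast
  then have "i = j \<or> i = mate j"
    using vs_eq_iff i j(1) mate_props[OF j(1)] by auto
  then show ?thesis using mate_props[OF i] unfolding j_def by auto
qed

lemma chord_eq_iff: "i < n \<Longrightarrow> j < n \<Longrightarrow> chord i = chord j \<longleftrightarrow> j = i \<or> j = mate i"
  unfolding chord_def using mate_props mate_mate vs_eq_iff by (metis doubleton_eq_iff)

lemma edge_cases: "e \<in> E \<Longrightarrow> (\<exists>i<n. e = cycle_edge i) \<or> (\<exists>i<n. e = chord i)"
proof -
  assume e: "e \<in> E"
  obtain u w where "e = {u, w}" "u \<in> V" using simple e unfolding simple_graph_def by blast
  moreover obtain i where "i < n" "vs ! i = u" using V_obtain_index calculation(2) by blast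
  ultimately have "i < n" "e \<in> {e\<in>E. vs ! i \<in> e}" using e by auto
  then show ?thesis using edges_at_vs prv_less by auto
qed

lemma even_n: "even n"
  using involution_card_even[of "{..<n}" mate] mate_props mate_mate by auto

lemma even_prv_iff: "i < n \<Longrightarrow> even (prv i) \<longleftrightarrow> odd i"
  using prv_eq even_n n_ge_3 by (cases i) auto

definition partner :: "nat \<Rightarrow> nat" where "partner i = (if even i then nxt i else prv i)"

lemma partner_props: "i < n \<Longrightarrow> partner i < n \<and> partner i \<noteq> i \<and> partner (partner i) = i"
proof -
  assume i: "i < n"
  have "even (nxt i) \<longleftrightarrow> odd i"
    using even_prv_iff[OF nxt_less[OF i]] prv_nxt[OF i] by simp
  then show ?thesis
    unfolding partner_def using i nxt_less prv_less nxt_neq prv_neq nxt_prv prv_nxt even_prv_iff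
    by auto
qed

definition arc :: "nat \<Rightarrow> nat \<Rightarrow> 'a \<times> 'a" where "arc i j = (vs ! i, vs ! j)"

definition flow_at :: "('a set \<Rightarrow> 'a) \<Rightarrow> ('a set \<Rightarrow> nat) \<Rightarrow> nat \<Rightarrow> nat" where
  "flow_at h w i = (\<Sum>e\<in>{e\<in>E. h e = vs ! i}. w e)"

lemma flow_at_eq:
  assumes "\<forall>e\<in>E. h e \<in> e" and i: "i < n"
  shows "flow_at h w i =
    (if h (cycle_edge i) = vs ! i then w (cycle_edge i) else 0) +
    (if h (cycle_edge (prv i)) = vs ! i then w (cycle_edge (prv i)) else 0) +
    (if h (chord i) = vs ! i then w (chord i) else 0)"
proof -
  have "{e\<in>E. h e = vs ! i} = {e \<in> {e\<in>E. vs ! i \<in> e}. h e = vs ! i}"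
    using assms(1) by auto
  also have "\<dots> = {e \<in> {cycle_edge i, cycle_edge (prv i), chord i}. h e = vs ! i}"
    using edges_at_vs[OF i] by simp
  finally have "flow_at h w i =
      (\<Sum>e\<in>{cycle_edge i, cycle_edge (prv i), chord i}. if h e = vs ! i then w e else 0)"
    unfolding flow_at_def by (simp only: sum.inter_filter finite.emptyI finite.insertI)
  moreover have "cycle_edge i \<noteq> cycle_edge (prv i)"
    using cycle_edge_inj[OF i prv_less[OF i]] prv_neq[OF i] by metis
  ultimately show ?thesis
    using chord_neq_cycle_edge[OF i i] chord_neq_cycle_edge[OF i prv_less[OF i]] by simp
qed

lemma circulation_iff_flow_at:
  "circulation V E ori w \<longleftrightarrow> (\<forall>i<n. flow_at (snd \<circ> ori) w i = flow_at (fst \<circ> ori) w i)"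
  unfolding circulation_def flow_at_def set_vs[symmetric] by (force simp: in_set_conv_nth)

end

locale coloured_cubic_hamiltonian = cubic_hamiltonian +
  fixes c :: "nat \<Rightarrow> bool"
  assumes c_mate: "i < n \<Longrightarrow> c (mate i) \<noteq> c i"
    and c_partner: "i < n \<Longrightarrow> c (partner i) \<noteq> c i"
begin

definition is_cycle_edge :: "'a set \<Rightarrow> bool" where
  "is_cycle_edge e \<longleftrightarrow> (\<exists>i<n. e = cycle_edge i)"
definition cycle_index :: "'a set \<Rightarrow> nat" where
  "cycle_index e = (SOME i. i < n \<and> e = cycle_edge i)"
definition chord_base :: "'a set \<Rightarrow> nat" where
  "chord_base e = (SOME i. i < n \<and> e = chord i \<and> \<not> c i)"

definition by_edge :: "(nat \<Rightarrow> 'b) \<Rightarrow> (nat \<Rightarrow> 'b) \<Rightarrow> 'a set \<Rightarrow> 'b" where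
  "by_edge f g e = (if is_cycle_edge e then f (cycle_index e) else g (chord_base e))"

lemma by_edge_cycle_edge [simp]: "i < n \<Longrightarrow> by_edge f g (cycle_edge i) = f i"
proof -
  assume i: "i < n"
  have "cycle_index (cycle_edge i) = i"
    unfolding cycle_index_def using i cycle_edge_inj by (intro some_equality) auto
  then show ?thesis unfolding by_edge_def is_cycle_edge_def using i by auto
qed

lemma by_edge_chord [simp]: "i < n \<Longrightarrow> by_edge f g (chord i) = g (if c i then mate i else i)"
proof -
  assume i: "i < n"
  have "chord_base (chord i) = (if c i then mate i else i)"
    unfolding chord_base_def
    using i mate_props[OF i] c_mate[OF i] mate_mate[OF i] chord_eq_iff[OF i]
      chord_eq_iff[OF mate_props[THEN conjunct1, OF i]]
    by (intro some_equality) auto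
  then show ?thesis
    unfolding by_edge_def is_cycle_edge_def using i chord_neq_cycle_edge by auto
qed

definition ori1 :: "'a set \<Rightarrow> 'a \<times> 'a" where
  "ori1 = by_edge (\<lambda>i. if odd i \<or> c i then arc i (nxt i) else arc (nxt i) i) (\<lambda>i. arc i (mate i))"
definition weight1 :: "'a set \<Rightarrow> nat" where
  "weight1 = by_edge (\<lambda>i. if even i \<and> c i then 3 else 1) (\<lambda>_. 2)"
definition ori2 :: "'a set \<Rightarrow> 'a \<times> 'a" where
  "ori2 = by_edge (\<lambda>i. arc i (nxt i)) (\<lambda>i. arc (mate i) i)"
definition weight2 :: "'a set \<Rightarrow> nat" where
  "weight2 = by_edge (\<lambda>i. if odd i then 2 else if c i then 1 else 3) (\<lambda>_. 1)"

lemma by_edge_orientation: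
  assumes "\<And>i. i < n \<Longrightarrow> f i = arc i (nxt i) \<or> f i = arc (nxt i) i"
    and "\<And>i. i < n \<Longrightarrow> g i = arc i (mate i) \<or> g i = arc (mate i) i"
  shows "is_orientation E (by_edge f g)"
  unfolding is_orientation_def
proof
  fix e assume "e \<in> E"
  then consider i where "i < n" "e = cycle_edge i" | i where "i < n" "e = chord i"
    using edge_cases by blast
  then show "e = {fst (by_edge f g e), snd (by_edge f g e)}"
  proof cases
    case 1
    then have "by_edge f g e = f i" by simp
    then show ?thesis using 1 assms(1)[of i] unfolding cycle_edge_def arc_def by auto
  next
    case 2
    then have "mate i < n" using mate_props by blast
    moreover have "by_edge f g e = g (if c i then mate i else i)" using 2 by simp
    ultimately show ?thesis
      using 2 assms(2)[of i] assms(2)[of "mate i"] mate_mate[of i] unfolding chord_def arc_def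
      by (auto split: if_splits)
  qed
qed

lemma is_orientation_ori1: "is_orientation E ori1"
  unfolding ori1_def by (rule by_edge_orientation) auto

lemma is_orientation_ori2: "is_orientation E ori2"
  unfolding ori2_def by (rule by_edge_orientation) auto

lemma neighbourhood_facts:
  assumes t: "t < n"
  shows "prv t < n" "nxt (prv t) = t" "mate (mate t) = t"
    "vs ! nxt t \<noteq> vs ! t" "vs ! prv t \<noteq> vs ! t" "vs ! mate t \<noteq> vs ! t"
    "even (prv t) \<longleftrightarrow> odd t" "odd t \<Longrightarrow> c (prv t) \<longleftrightarrow> \<not> c t"
  using t prv_less nxt_prv mate_mate vs_eq_iff nxt_less nxt_neq prv_neq mate_props even_prv_iff
    c_partner[OF t] unfolding partner_def by auto

lemma circulation_ori1: "circulation V E ori1 weight1"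
  unfolding circulation_iff_flow_at
proof (intro allI impI)
  fix t assume t: "t < n"
  show "flow_at (snd \<circ> ori1) weight1 t = flow_at (fst \<circ> ori1) weight1 t"
    unfolding flow_at_eq[OF is_orientation_ends(1)[OF is_orientation_ori1] t]
      flow_at_eq[OF is_orientation_ends(2)[OF is_orientation_ori1] t]
    using neighbourhood_facts[OF t] t unfolding ori1_def weight1_def arc_def
    by (cases "even t"; cases "c t") auto
qed

lemma circulation_ori2: "circulation V E ori2 weight2"
  unfolding circulation_iff_flow_at
proof (intro allI impI)
  fix t assume t: "t < n"
  show "flow_at (snd \<circ> ori2) weight2 t = flow_at (fst \<circ> ori2) weight2 t"
    unfolding flow_at_eq[OF is_orientation_ends(1)[OF is_orientation_ori2] t]
      flow_at_eq[OF is_orientation_ends(2)[OF is_orientation_ori2] t]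
    using neighbourhood_facts[OF t] t unfolding ori2_def weight2_def arc_def
    by (cases "even t"; cases "c t") auto
qed

lemma weight_positive: "1 \<le> weight1 e" "1 \<le> weight2 e"
  unfolding weight1_def weight2_def by_edge_def by auto

lemma weight_one: "e \<in> E \<Longrightarrow> weight1 e = 1 \<or> weight2 e = 1"
  using edge_cases[of e] unfolding weight1_def weight2_def by auto

lemma deletable_ori1_or_ori2:
  assumes "k_edge_connected 3 V E" and "e \<in> E"
  shows "deletable V E ori1 e \<or> deletable V E ori2 e"
  using weight_one[OF assms(2)] weight_positive
    circulation_deletable[OF simple assms(1) is_orientation_ori1 circulation_ori1]
    circulation_deletable[OF simple assms(1) is_orientation_ori2 circulation_ori2]
  by blast

end

lemma (in cubic_hamiltonian) covering_orientation_pair: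
  assumes "k_edge_connected 3 V E"
  shows "\<exists>o1 o2. is_orientation E o1 \<and> is_orientation E o2 \<and>
    (\<forall>e\<in>E. deletable V E o1 e \<or> deletable V E o2 e)"
proof -
  obtain c :: "nat \<Rightarrow> bool" where c: "\<forall>i\<in>{..<n}. c (mate i) \<noteq> c i \<and> c (partner i) \<noteq> c i"
    using two_involutions_colouring[of "{..<n}" mate partner] mate_props mate_mate partner_props by auto
  interpret coloured_cubic_hamiltonian V E vs c
    using c by unfold_locales auto
  show ?thesis
    using is_orientation_ori1 is_orientation_ori2 deletable_ori1_or_ori2[OF assms] by blast
qed

theorem mainTheorem4:
  fixes V :: "'a set" and E :: "'a set set"
  assumes "simple_graph V E"
    and "k_edge_connected 3 V E"
    and "cubic V E"
    and "\<exists>vs. hamiltonian_cycle V E vs"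
  shows "frank_number V E = 2"
proof -
  obtain vs where "hamiltonian_cycle V E vs" using assms(4) by blast
  then interpret cubic_hamiltonian V E vs
    using assms(1,3) by unfold_locales
  have "0 < n" "1 < n" using n_ge_3 by auto
  then have two_vertices: "vs ! 0 \<in> V" "vs ! 1 \<in> V" "vs ! 0 \<noteq> vs ! 1"
    using vs_in_V vs_eq_iff by auto
  obtain o1 o2 where "is_orientation E o1" "is_orientation E o2"
    "\<forall>e\<in>E. deletable V E o1 e \<or> deletable V E o2 e"
    using covering_orientation_pair[OF assms(2)] by blast
  moreover have "E \<noteq> {}" using cycle_edge_in_E \<open>0 < n\<close> by blast
  moreover have "\<exists>e\<in>E. \<not> deletable V E ori e" if "is_orientation E ori" for ori
    using degree_three_not_all_deletable[OF assms(1) that two_vertices] edges_at_vs_card \<open>0 < n\<close>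
    by simp
  ultimately show ?thesis by (rule frank_number_eq_2I)
qed

end
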